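(* Let $n\ge2$, $a\in H_n\rtimes S_n$, $g\in C_{H_n}(a)$ and $i\in I(a)$. If $t_i(g)\neq0$, then $t_j(g)\neq0$ for all $j\in I(a)$ with $[j]_a\sim_a[i]_a$.
   Context: $\mathbb{N}=\{1,2,\dots\}$, $X_n=\{1,\dots,n\}\times\mathbb{N}$, permutations act on the right. $H_n$ is the group of bijections $g$ of $X_n$ with $z_i(g)\in\mathbb{N}$, $t_i(g)\in\mathbb{Z}$ such that $(i,m)g=(i,m+t_i(g))$ for all $m\ge z_i(g)$. $S_n$ acts by $(i,m)\sigma=(i\sigma,m)$; $H_n\rtimes S_n\le\mathrm{Sym}(X_n)$ is generated by $H_n$ and these; each $a$ is uniquely $\omega_a\sigma_a$ with $\omega_a\in H_n$, $\sigma_a\in S_n$, $t_i(a):=t_i(\omega_a)$. $C_{H_n}(a)=\{g\in H_n: ga=ag\}$. $[i]_a$ is the orbit of $i$ under $\langle\sigma_a\rangle$, $t_{[i]}(a)=\sum_{k\in[i]_a}t_k(a)$, $I(a)=\{i:t_{[i]}(a)\ne0\}$. For $i_1\in I(a)$, $m_1\in\mathbb{N}$: $X_{i,m}(a)=\{(i,m')\in X_n: m'\equiv m\bmod|t_{[i]}(a)|\}$, $X_{[i_1],m_1}(a)=\bigsqcup_{q=1}^{|[i_1]_a|}X_{i_q,m_q}(a)$ with $i_q=i_1\sigma_a^{q-1}$, $m_q=m_1+\sum_{d=1}^{q-1}t_{i_d}(a)$. Almost equal = finite symmetric difference. $\sim_a$ is the equivalence relation on $\{[k]_a:k\in I(a)\}$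 generated by $[i]_a\sim_a[j]_a$ whenever some $\langle a\rangle$-orbit is almost equal to $X_{[i],d}(a)\sqcup X_{[j],e}(a)$ for some $d,e\in\mathbb{N}$. *)

theory Defs
  imports Main "HOL-Combinatorics.Permutations"
begin

text \<open>Points of X_n are pairs (i,m) with 1 \<le> i \<le> n and m \<ge> 1 (positive naturals).
  Permutations act on the right: (x)g is written g x, so (x)(gh) = h (g x).\<close>

definition Xn :: "nat \<Rightarrow> (nat \<times> nat) set" where
  "Xn n = {1..n} \<times> {1..}"

definition Hn :: "nat \<Rightarrow> ((nat \<times> nat) \<Rightarrow> (nat \<times> nat)) set" where
  "Hn n = {g. bij_betw g (Xn n) (Xn n) \<and>
     (\<forall>i\<in>{1..n}. \<exists>z\<ge>1. \<exists>t::int. \<forall>m\<ge>z.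
        fst (g (i, m)) = i \<and> int (snd (g (i, m))) = int m + t)}"

definition tr :: "((nat \<times> nat) \<Rightarrow> (nat \<times> nat)) \<Rightarrow> nat \<Rightarrow> int" where
  "tr g i = (THE t. \<exists>z. \<forall>m\<ge>z. fst (g (i, m)) = i \<and> int (snd (g (i, m))) = int m + t)"

definition sact :: "(nat \<Rightarrow> nat) \<Rightarrow> (nat \<times> nat) \<Rightarrow> (nat \<times> nat)" where
  "sact \<sigma> x = (\<sigma> (fst x), snd x)"

text \<open>The element a = \<omega> \<sigma> of H_n \<rtimes> S_n (first \<omega>, then \<sigma>, right action).\<close>
definition semi :: "((nat \<times> nat) \<Rightarrow> (nat \<times> nat)) \<Rightarrow> (nat \<Rightarrow> nat) \<Rightarrow> (nat \<times> nat) \<Rightarrow> (nat \<times> nat)" where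
  "semi \<omega> \<sigma> x = sact \<sigma> (\<omega> x)"

definition orbS :: "(nat \<Rightarrow> nat) \<Rightarrow> nat \<Rightarrow> nat set" where
  "orbS \<sigma> i = {(\<sigma> ^^ k) i | k. True}"

text \<open>t_[i](a) = sum of t_k(a) = t_k(\<omega>_a) over k \<in> [i]_a.\<close>
definition tO :: "((nat \<times> nat) \<Rightarrow> (nat \<times> nat)) \<Rightarrow> (nat \<Rightarrow> nat) \<Rightarrow> nat \<Rightarrow> int" where
  "tO \<omega> \<sigma> i = (\<Sum>k\<in>orbS \<sigma> i. tr \<omega> k)"

definition Ia :: "nat \<Rightarrow> ((nat \<times> nat) \<Rightarrow> (nat \<times> nat)) \<Rightarrow> (nat \<Rightarrow> nat) \<Rightarrow> nat set" where
  "Ia n \<omega> \<sigma> = {i\<in>{1..n}. tO \<omega> \<sigma> i \<noteq> 0}"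

definition Xim :: "nat \<Rightarrow> ((nat \<times> nat) \<Rightarrow> (nat \<times> nat)) \<Rightarrow> (nat \<Rightarrow> nat) \<Rightarrow> nat \<Rightarrow> int \<Rightarrow> (nat \<times> nat) set" where
  "Xim n \<omega> \<sigma> i m = {(i', m') \<in> Xn n. i' = i \<and>
      int m' mod \<bar>tO \<omega> \<sigma> i\<bar> = m mod \<bar>tO \<omega> \<sigma> i\<bar>}"

definition XO :: "nat \<Rightarrow> ((nat \<times> nat) \<Rightarrow> (nat \<times> nat)) \<Rightarrow> (nat \<Rightarrow> nat) \<Rightarrow> nat \<Rightarrow> nat \<Rightarrow> (nat \<times> nat) set" where
  "XO n \<omega> \<sigma> i1 m1 = (\<Union>q\<in>{1..card (orbS \<sigma> i1)}.
      Xim n \<omega> \<sigma> ((\<sigma> ^^ (q - 1)) i1)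
        (int m1 + (\<Sum>d\<in>{1..<q}. tr \<omega> ((\<sigma> ^^ (d - 1)) i1))))"

text \<open>The \<langle>a\<rangle>-orbit of x in X_n (a a bijection of X_n; negative powers
  expressed via y a^k = x).\<close>
definition aorbit :: "nat \<Rightarrow> ((nat \<times> nat) \<Rightarrow> (nat \<times> nat)) \<Rightarrow> (nat \<times> nat) \<Rightarrow> (nat \<times> nat) set" where
  "aorbit n a x = {y\<in>Xn n. \<exists>k. (a ^^ k) x = y \<or> (a ^^ k) y = x}"

definition almost_equal :: "'a set \<Rightarrow> 'a set \<Rightarrow> bool" where
  "almost_equal A B \<longleftrightarrow> finite ((A - B) \<union> (B - A))"

definition simgen :: "nat \<Rightarrow> ((nat \<times> nat) \<Rightarrow> (nat \<times> nat)) \<Rightarrow> (nat \<Rightarrow> nat) \<Rightarrow> nat set \<Rightarrow> nat set \<Rightarrow> bool" where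
  "simgen n \<omega> \<sigma> A B \<longleftrightarrow> (\<exists>i j. i \<in> Ia n \<omega> \<sigma> \<and> j \<in> Ia n \<omega> \<sigma> \<and>
      A = orbS \<sigma> i \<and> B = orbS \<sigma> j \<and>
      (\<exists>x\<in>Xn n. \<exists>d\<ge>1. \<exists>e\<ge>1.
         XO n \<omega> \<sigma> i d \<inter> XO n \<omega> \<sigma> j e = {} \<and>
         almost_equal (aorbit n (semi \<omega> \<sigma>) x) (XO n \<omega> \<sigma> i d \<union> XO n \<omega> \<sigma> j e)))"

definition orbset :: "nat \<Rightarrow> ((nat \<times> nat) \<Rightarrow> (nat \<times> nat)) \<Rightarrow> (nat \<Rightarrow> nat) \<Rightarrow> nat set set" where
  "orbset n \<omega> \<sigma> = {orbS \<sigma> k | k. k \<in> Ia n \<omega> \<sigma>}"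

definition sim_a :: "nat \<Rightarrow> ((nat \<times> nat) \<Rightarrow> (nat \<times> nat)) \<Rightarrow> (nat \<Rightarrow> nat) \<Rightarrow> nat set \<Rightarrow> nat set \<Rightarrow> bool" where
  "sim_a n \<omega> \<sigma> A B \<longleftrightarrow> A \<in> orbset n \<omega> \<sigma> \<and> B \<in> orbset n \<omega> \<sigma> \<and>
     (\<lambda>X Y. X \<in> orbset n \<omega> \<sigma> \<and> Y \<in> orbset n \<omega> \<sigma> \<and>
        (simgen n \<omega> \<sigma> X Y \<or> simgen n \<omega> \<sigma> Y X))\<^sup>*\<^sup>* A B"

end

theory Submission
  imports Defs
begin

text \<open>Suppose \<open>t_i(g) = 0\<close> and let \<open>O\<close> be an \<open>\<langle>a\<rangle>\<close>-orbit almost equal to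
  \<open>X_[i],d(a) \<union> X_[j],e(a)\<close>. Then \<open>O\<close> contains points arbitrarily far out on the
  rows \<open>i\<close> and \<open>j\<close>. Far out on row \<open>i\<close> the element \<open>g\<close> is the identity, so \<open>g\<close> fixes a
  point of \<open>O\<close>; as \<open>g\<close> commutes with \<open>a\<close>, it fixes all of \<open>O\<close>, hence infinitely many
  points of row \<open>j\<close>, which forces \<open>t_j(g) = 0\<close>. Commuting with \<open>a\<close> also makes
  \<open>t_k(g)\<close> constant on \<open>\<langle>\<sigma>_a\<rangle>\<close>-orbits, so the vanishing of \<open>t(g)\<close> is a property
  of the classes \<open>[k]_a\<close>; it is preserved by the generators of \<open>\<sim>_a\<close>, hence by \<open>\<sim>_a\<close>.\<close>

lemma funpow_commute_on:
  assumes "bij_betw f S S" "\<forall>x\<in>S. g (f x) = f (g x)" "x \<in> S"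
  shows "g ((f ^^ k) x) = (f ^^ k) (g x)"
proof (induction k)
  case (Suc k)
  have "(f ^^ k) x \<in> S"
    using bij_betwE[OF bij_betw_funpow[OF assms(1)]] assms(3) by blast
  then show ?case using Suc.IH assms(2) by simp
qed simp

lemma fixed_funpow_iff:
  assumes "bij_betw f S S" "g ` S \<subseteq> S" "\<forall>x\<in>S. g (f x) = f (g x)" "x \<in> S"
  shows "g ((f ^^ k) x) = (f ^^ k) x \<longleftrightarrow> g x = x"
proof -
  have "inj_on (f ^^ k) S"
    using bij_betw_funpow[OF assms(1)] by (rule bij_betw_imp_inj_on)
  moreover have "g x \<in> S" using assms(2,4) by blast
  ultimately show ?thesis
    using funpow_commute_on[OF assms(1,3,4)] assms(4) by (metis inj_onD)
qed

lemma funpow_permutes_in: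
  assumes "\<sigma> permutes S" "k \<in> S"
  shows "(\<sigma> ^^ p) k \<in> S"
  using bij_betwE[OF bij_betw_funpow[OF permutes_imp_bij[OF assms(1)]]] assms(2) by blast

lemma orbS_self: "k \<in> orbS \<sigma> k"
  unfolding orbS_def by (metis (mono_tags) funpow_0 mem_Collect_eq)

lemma aorbit_fixed_iff:
  assumes "bij_betw a (Xn n) (Xn n)" "g ` Xn n \<subseteq> Xn n" "\<forall>x\<in>Xn n. g (a x) = a (g x)"
    and "x \<in> Xn n" "y \<in> aorbit n a x"
  shows "g y = y \<longleftrightarrow> g x = x"
proof -
  from assms(5) obtain k where "y \<in> Xn n" "(a ^^ k) x = y \<or> (a ^^ k) y = x"
    unfolding aorbit_def by blast
  then show ?thesis
    using fixed_funpow_iff[OF assms(1-3)] assms(4) by blast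
qed

lemma semi_bij_betw:
  assumes "\<omega> \<in> Hn n" "\<sigma> permutes {1..n}"
  shows "bij_betw (semi \<omega> \<sigma>) (Xn n) (Xn n)"
proof -
  have "semi \<omega> \<sigma> = map_prod \<sigma> id \<circ> \<omega>"
    by (auto simp: semi_def sact_def map_prod_def split_beta)
  moreover have "bij_betw (map_prod \<sigma> id) (Xn n) (Xn n)"
    unfolding Xn_def using permutes_imp_bij[OF assms(2)] bij_betw_id
    by (rule bij_betw_map_prod)
  moreover have "bij_betw \<omega> (Xn n) (Xn n)" using assms(1) by (simp add: Hn_def)
  ultimately show ?thesis by (simp add: bij_betw_trans)
qed

lemma tr_eventually:
  assumes "g \<in> Hn n" "k \<in> {1..n}"
  shows "\<forall>\<^sub>F m in sequentially. g (k, m) = (k, nat (int m + tr g k))"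
proof -
  from assms obtain z t where zt: "\<forall>m\<ge>z. fst (g (k, m)) = k \<and> int (snd (g (k, m))) = int m + t"
    unfolding Hn_def by blast
  have "tr g k = t" unfolding tr_def
  proof (rule the_equality)
    fix t' assume "\<exists>z'. \<forall>m\<ge>z'. fst (g (k, m)) = k \<and> int (snd (g (k, m))) = int m + t'"
    then obtain z' where "\<forall>m\<ge>z'. int (snd (g (k, m))) = int m + t'" by blast
    then show "t' = t" using zt by (metis max.cobounded1 max.cobounded2 add_left_cancel)
  qed (use zt in blast)
  then show ?thesis
    using zt unfolding eventually_sequentially by (metis nat_int prod.collapse)
qed

lemma eventually_sequentially_shift:
  assumes "\<forall>\<^sub>F m in sequentially. P m"
  shows "\<forall>\<^sub>F m in sequentially. P (nat (int m + c))"
proof -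
  from assms obtain N where "\<forall>m\<ge>N. P m" unfolding eventually_sequentially by blast
  then have "\<forall>m\<ge>N + nat \<bar>c\<bar>. P (nat (int m + c))" by (simp add: nat_le_iff)
  then show ?thesis unfolding eventually_sequentially by blast
qed

lemma tr_eq_0_iff_frequently_fixed:
  assumes "g \<in> Hn n" "k \<in> {1..n}"
  shows "tr g k = 0 \<longleftrightarrow> (\<exists>\<^sub>F m in sequentially. g (k, m) = (k, m))"
proof
  assume "tr g k = 0"
  then have "\<forall>\<^sub>F m in sequentially. g (k, m) = (k, m)" using tr_eventually[OF assms] by simp
  then show "\<exists>\<^sub>F m in sequentially. g (k, m) = (k, m)" by (simp add: eventually_frequently)
next
  assume "\<exists>\<^sub>F m in sequentially. g (k, m) = (k, m)"
  moreover have "\<forall>\<^sub>F m in sequentially. m \<ge> 1 \<and> g (k, m) = (k, nat (int m + tr g k))"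
    using eventually_ge_at_top tr_eventually[OF assms] by (rule eventually_conj)
  ultimately obtain m where "m \<ge> 1" "m = nat (int m + tr g k)"
    using frequently_eventually_conj frequently_ex by fastforce
  then show "tr g k = 0" by linarith
qed

text \<open>Compare \<open>g a\<close> and \<open>a g\<close> on a point \<open>(k, m)\<close> far out on row \<open>k\<close>: both send it to
  row \<open>\<sigma> k\<close>, shifted by \<open>t_k(\<omega>) + t_\<sigma>k(g)\<close> and \<open>t_k(g) + t_k(\<omega>)\<close> respectively.\<close>
lemma tr_permute_eq:
  assumes "\<omega> \<in> Hn n" "\<sigma> permutes {1..n}" "g \<in> Hn n"
    and comm: "\<forall>x\<in>Xn n. g (semi \<omega> \<sigma> x) = semi \<omega> \<sigma> (g x)"
    and k: "k \<in> {1..n}"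
  shows "tr g (\<sigma> k) = tr g k"
proof -
  have \<sigma>k: "\<sigma> k \<in> {1..n}" using permutes_in_image[OF assms(2)] k by simp
  let ?tg = "tr g k" and ?t\<omega> = "tr \<omega> k" and ?tg' = "tr g (\<sigma> k)"
  have "\<forall>\<^sub>F m in sequentially. m \<ge> 1 + nat \<bar>?tg\<bar> + nat \<bar>?t\<omega>\<bar>
      \<and> g (k, m) = (k, nat (int m + ?tg))
      \<and> \<omega> (k, nat (int m + ?tg)) = (k, nat (int (nat (int m + ?tg)) + ?t\<omega>))
      \<and> \<omega> (k, m) = (k, nat (int m + ?t\<omega>))
      \<and> g (\<sigma> k, nat (int m + ?t\<omega>)) = (\<sigma> k, nat (int (nat (int m + ?t\<omega>)) + ?tg'))"
    by (intro eventually_conj eventually_ge_at_top tr_eventually[OF assms(3) k]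
        tr_eventually[OF assms(1) k] tr_eventually[OF assms(3) \<sigma>k]
        eventually_sequentially_shift[OF tr_eventually[OF assms(1) k]]
        eventually_sequentially_shift[OF tr_eventually[OF assms(3) \<sigma>k]])
  then obtain m where m: "m \<ge> 1 + nat \<bar>?tg\<bar> + nat \<bar>?t\<omega>\<bar>"
    "g (k, m) = (k, nat (int m + ?tg))"
    "\<omega> (k, nat (int m + ?tg)) = (k, nat (int (nat (int m + ?tg)) + ?t\<omega>))"
    "\<omega> (k, m) = (k, nat (int m + ?t\<omega>))"
    "g (\<sigma> k, nat (int m + ?t\<omega>)) = (\<sigma> k, nat (int (nat (int m + ?t\<omega>)) + ?tg'))"
    using eventually_happens'[OF sequentially_bot] by blast
  have "(k, m) \<in> Xn n" using k m(1) by (simp add: Xn_def)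
  then have "g (semi \<omega> \<sigma> (k, m)) = semi \<omega> \<sigma> (g (k, m))" using comm by blast
  then have "nat (int (nat (int m + ?t\<omega>)) + ?tg') = nat (int (nat (int m + ?tg)) + ?t\<omega>)"
    using m(2-5) by (simp add: semi_def sact_def)
  moreover have "int m + ?t\<omega> \<ge> 0" "int m + ?tg \<ge> 0" "int m + ?tg + ?t\<omega> > 0"
    using m(1) by arith+
  ultimately show ?thesis by (simp add: nat_eq_iff split: if_splits)
qed

lemma orbS_tr_eq_0_iff:
  assumes "\<omega> \<in> Hn n" "\<sigma> permutes {1..n}" "g \<in> Hn n"
    and "\<forall>x\<in>Xn n. g (semi \<omega> \<sigma> x) = semi \<omega> \<sigma> (g x)"
    and "k \<in> {1..n}"
  shows "(\<forall>y\<in>orbS \<sigma> k. tr g y = 0) \<longleftrightarrow> tr g k = 0"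
proof -
  have "tr g ((\<sigma> ^^ p) k) = tr g k" for p
    by (induction p)
      (simp_all add: tr_permute_eq[OF assms(1-4) funpow_permutes_in[OF assms(2,5)]])
  then show ?thesis using orbS_self[of k \<sigma>] unfolding orbS_def by auto
qed

lemma frequently_in_Xim:
  assumes "k \<in> {1..n}" "tO \<omega> \<sigma> k \<noteq> 0"
  shows "\<exists>\<^sub>F m in sequentially. (k, m) \<in> Xim n \<omega> \<sigma> k c"
  unfolding frequently_sequentially
proof
  fix N
  define T where "T = nat \<bar>tO \<omega> \<sigma> k\<bar>"
  have "T \<ge> 1" using assms(2) by (simp add: T_def)
  define m where "m = nat (c mod int T) + T * (N + 1)"
  have "int m = c mod int T + int T * int (N + 1)"
    using \<open>T \<ge> 1\<close> by (simp add: m_def algebra_simps)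
  then have "int m mod int T = c mod int T" by simp
  moreover have "m \<ge> N + 1"
    unfolding m_def using \<open>T \<ge> 1\<close> by (metis le_add2 mult_le_mono1 mult_1 order_trans)
  ultimately show "\<exists>m\<ge>N. (k, m) \<in> Xim n \<omega> \<sigma> k c"
    using assms(1) by (intro exI[of _ m]) (simp add: Xim_def Xn_def T_def)
qed

lemma Xim_subset_XO:
  assumes "\<sigma> permutes {1..n}" "k \<in> {1..n}"
  shows "Xim n \<omega> \<sigma> k (int d) \<subseteq> XO n \<omega> \<sigma> k d"
proof -
  have "orbS \<sigma> k \<subseteq> {1..n}" using funpow_permutes_in[OF assms] by (auto simp: orbS_def)
  then have "card (orbS \<sigma> k) \<ge> 1"
    using orbS_self[of k \<sigma>]
    by (metis One_nat_def Suc_leI card_gt_0_iff empty_iff finite_atLeastAtMost finite_subset)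
  then show ?thesis unfolding XO_def by force
qed

lemma frequently_in_almost_equal:
  assumes "almost_equal A B" "\<exists>\<^sub>F m in sequentially. (k, m) \<in> B"
  shows "\<exists>\<^sub>F m in sequentially. (k, m) \<in> A"
proof -
  have "finite (Pair k -` (B - A))"
    using assms(1) unfolding almost_equal_def by (auto intro: finite_vimageI inj_onI)
  then have "\<forall>\<^sub>F m in sequentially. (k, m) \<notin> B - A"
    by (simp add: cofinite_eq_sequentially[symmetric] eventually_cofinite vimage_def)
  with assms(2) show ?thesis by (auto elim: frequently_rev_mp eventually_mono)
qed

lemma tr_eq_0_transfer_along_aorbit:
  assumes a: "bij_betw a (Xn n) (Xn n)" and g: "g \<in> Hn n"
    and comm: "\<forall>x\<in>Xn n. g (a x) = a (g x)" and x: "x \<in> Xn n"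
    and i: "i \<in> {1..n}" "\<exists>\<^sub>F m in sequentially. (i, m) \<in> aorbit n a x"
    and j: "j \<in> {1..n}" "\<exists>\<^sub>F m in sequentially. (j, m) \<in> aorbit n a x"
    and "tr g i = 0"
  shows "tr g j = 0"
proof -
  have gX: "g ` Xn n \<subseteq> Xn n" using g by (simp add: Hn_def bij_betw_def)
  have "\<forall>\<^sub>F m in sequentially. g (i, m) = (i, m)" using tr_eventually[OF g i(1)] \<open>tr g i = 0\<close> by simp
  then obtain m where "(i, m) \<in> aorbit n a x" "g (i, m) = (i, m)"
    using frequently_eventually_conj[OF i(2)] frequently_ex by blast
  then have "\<forall>y\<in>aorbit n a x. g y = y" using aorbit_fixed_iff[OF a gX comm x] by blast
  with j(2) have "\<exists>\<^sub>F m in sequentially. g (j, m) = (j, m)" by (auto elim: frequently_elim1)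
  then show ?thesis using tr_eq_0_iff_frequently_fixed[OF g j(1)] by blast
qed

lemma simgen_tr_eq_0_iff:
  assumes \<omega>: "\<omega> \<in> Hn n" and \<sigma>: "\<sigma> permutes {1..n}" and g: "g \<in> Hn n"
    and comm: "\<forall>x\<in>Xn n. g (semi \<omega> \<sigma> x) = semi \<omega> \<sigma> (g x)"
    and "simgen n \<omega> \<sigma> A B"
  shows "(\<forall>k\<in>A. tr g k = 0) \<longleftrightarrow> (\<forall>k\<in>B. tr g k = 0)"
proof -
  obtain i j x d e where ij: "i \<in> Ia n \<omega> \<sigma>" "j \<in> Ia n \<omega> \<sigma>" "A = orbS \<sigma> i" "B = orbS \<sigma> j"
    and x: "x \<in> Xn n"
    and O: "almost_equal (aorbit n (semi \<omega> \<sigma>) x) (XO n \<omega> \<sigma> i d \<union> XO n \<omega> \<sigma> j e)"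
    using assms(5) unfolding simgen_def by blast
  have "\<exists>\<^sub>F m in sequentially. (k, m) \<in> aorbit n (semi \<omega> \<sigma>) x"
    if "k \<in> Ia n \<omega> \<sigma>" "XO n \<omega> \<sigma> k f \<subseteq> XO n \<omega> \<sigma> i d \<union> XO n \<omega> \<sigma> j e" for k f
  proof (rule frequently_in_almost_equal[OF O])
    have "k \<in> {1..n}" "tO \<omega> \<sigma> k \<noteq> 0" using that(1) by (auto simp: Ia_def)
    then show "\<exists>\<^sub>F m in sequentially. (k, m) \<in> XO n \<omega> \<sigma> i d \<union> XO n \<omega> \<sigma> j e"
      using frequently_in_Xim Xim_subset_XO[OF \<sigma>] that(2) by (blast intro: frequently_elim1)
  qed
  from this[of i d] this[of j e] ij(1,2)
  have "\<exists>\<^sub>F m in sequentially. (i, m) \<in> aorbit n (semi \<omega> \<sigma>) x"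
    "\<exists>\<^sub>F m in sequentially. (j, m) \<in> aorbit n (semi \<omega> \<sigma>) x" by blast+
  moreover have "i \<in> {1..n}" "j \<in> {1..n}" using ij(1,2) by (auto simp: Ia_def)
  ultimately show ?thesis
    using tr_eq_0_transfer_along_aorbit[OF semi_bij_betw[OF \<omega> \<sigma>] g comm x]
      orbS_tr_eq_0_iff[OF \<omega> \<sigma> g comm] ij(3,4) by metis
qed

theorem lemma6p2:
  fixes n :: nat and \<omega> g :: "(nat \<times> nat) \<Rightarrow> (nat \<times> nat)" and \<sigma> :: "nat \<Rightarrow> nat"
    and i j :: nat
  assumes "n \<ge> 2"
    and "\<omega> \<in> Hn n" and "\<sigma> permutes {1..n}"
    and "g \<in> Hn n"
    and "\<forall>x\<in>Xn n. g (semi \<omega> \<sigma> x) = semi \<omega> \<sigma> (g x)"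
    and "i \<in> Ia n \<omega> \<sigma>"
    and "tr g i \<noteq> 0"
    and "j \<in> Ia n \<omega> \<sigma>"
    and "sim_a n \<omega> \<sigma> (orbS \<sigma> j) (orbS \<sigma> i)"
  shows "tr g j \<noteq> 0"
proof -
  let ?vanishes = "\<lambda>A. \<forall>k\<in>A. tr g k = 0"
  have "(\<lambda>X Y. X \<in> orbset n \<omega> \<sigma> \<and> Y \<in> orbset n \<omega> \<sigma> \<and>
          (simgen n \<omega> \<sigma> X Y \<or> simgen n \<omega> \<sigma> Y X))\<^sup>*\<^sup>* (orbS \<sigma> j) (orbS \<sigma> i)"
    using assms(9) unfolding sim_a_def by blast
  then have "?vanishes (orbS \<sigma> j) \<longleftrightarrow> ?vanishes (orbS \<sigma> i)"
    by (induction rule: rtranclp_induct) (use simgen_tr_eq_0_iff[OF assms(2-5)] in blast)+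
  moreover have "i \<in> {1..n}" "j \<in> {1..n}" using assms(6,8) by (auto simp: Ia_def)
  ultimately show ?thesis
    using orbS_tr_eq_0_iff[OF assms(2-5)] assms(7) by metis
qed

end
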